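(* Let $K\in\{\mathbb R,\mathbb C,\mathbb H\}$ and let $(E,d)$ be a metric vector space over $K$. Then $d$ is asymptotically isometric to (the distance $\|x-y\|$ of) a norm $\|\cdot\|$ on $E$ if and only if the following three conditions hold: (1) $d$ is asymptotically multiplicative; (2) $d$ is unbounded on every non-trivial linear subspace of $E$; (3) for every $C_1>1$ there exists $C_0\ge0$ such that for every $n\ge2$ and all $x_1,\dots,x_n,y_1,\dots,y_n\in E$, $$d\Big(\sum_{i=1}^n x_i,\sum_{i=1}^n y_i\Big)\le C_1\sum_{i=1}^n d(x_i,y_i)+nC_0.$$ In that case a norm with this property is given by $\|x\|=\lim_{n\to+\infty}\frac1n\int_{\mathbb U}d(nux,0)\,d\mu(u)$.
   Context: $K$ is $\mathbb R$, $\mathbb C$ or $\mathbb H$ with the usual absolute value. A metric vector space $(E,d)$ is a topological vector space over $K$ whose topology is generated by the metric $d$. $\mathbb U=\{u\in K:|u|=1\}$ and $\mu$ is the right-invariant Haar probability measure on $\mathbb U$. A distance $d$ is asymptotically isometric to a distance $\delta$ if for every $C_1>1$ there is $C_2\ge0$ with $C_1^{-1}\delta(x,y)-C_2\le d(x,y)\le C_1\delta(x,y)+C_2$ for all $x,y$. The distance $d$ is asymptotically multiplicative if for every $C_1>1$ there exist $C_2\ge0$, $C_3\ge0$ such that for all $\lambda\in K$ and $x,y\in E$: $C_1^{-1}|\lambda|d(x,y)-C_2|\lambda|-C_3\le d(\lambda x,\lambda y)\le C_1|\lambda|d(x,y)+C_2|\lambda|+C_3$. $d$ is unbounded on a subspace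 $V$ if $\sup_{x,y\in V}d(x,y)=\infty$. *)

theory Defs
  imports "HOL-Analysis.Analysis" "HOL-Probability.Probability"
begin

text \<open>Scalars: a type 'k of class real_normed_div_algebra (associative real division
algebra with multiplicative norm) that is finite-dimensional (euclidean_space).
Up to isometric isomorphism these are exactly R, C, H with the usual absolute value.\<close>

definition left_module :: "('k::real_normed_div_algebra \<Rightarrow> 'e::ab_group_add \<Rightarrow> 'e) \<Rightarrow> bool" where
  "left_module smul \<longleftrightarrow>
     (\<forall>a x y. smul a (x + y) = smul a x + smul a y) \<and>
     (\<forall>a b x. smul (a + b) x = smul a x + smul b x) \<and>
     (\<forall>a b x. smul (a * b) x = smul a (smul b x)) \<and>
     (\<forall>x. smul 1 x = x)"

definition metric_vector_space ::
  "('k::{real_normed_div_algebra,euclidean_space} \<Rightarrow> 'e::ab_group_add \<Rightarrow> 'e) \<Rightarrow> ('e \<Rightarrow> 'e \<Rightarrow> real) \<Rightarrow> bool" where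
  "metric_vector_space smul d \<longleftrightarrow>
     left_module smul \<and>
     Metric_space UNIV d \<and> (\<forall>x y. d x y = 0 \<longrightarrow> x = y) \<and>
     continuous_map (prod_topology (Metric_space.mtopology UNIV d) (Metric_space.mtopology UNIV d))
        (Metric_space.mtopology UNIV d) (\<lambda>(x, y). x + y) \<and>
     continuous_map (prod_topology (euclidean :: 'k topology) (Metric_space.mtopology UNIV d))
        (Metric_space.mtopology UNIV d) (\<lambda>(a, x). smul a x)"

definition is_norm :: "('k::real_normed_div_algebra \<Rightarrow> 'e::ab_group_add \<Rightarrow> 'e) \<Rightarrow> ('e \<Rightarrow> real) \<Rightarrow> bool" where
  "is_norm smul N \<longleftrightarrow>
     (\<forall>x. N x \<ge> 0) \<and> (\<forall>x. N x = 0 \<longleftrightarrow> x = 0) \<and>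
     (\<forall>a x. N (smul a x) = norm a * N x) \<and>
     (\<forall>x y. N (x + y) \<le> N x + N y)"

definition asymp_isometric :: "('e \<Rightarrow> 'e \<Rightarrow> real) \<Rightarrow> ('e \<Rightarrow> 'e \<Rightarrow> real) \<Rightarrow> bool" where
  "asymp_isometric d \<delta> \<longleftrightarrow>
     (\<forall>C1>1. \<exists>C2\<ge>0. \<forall>x y. \<delta> x y / C1 - C2 \<le> d x y \<and> d x y \<le> C1 * \<delta> x y + C2)"

definition asymp_multiplicative ::
  "('k::real_normed_div_algebra \<Rightarrow> 'e \<Rightarrow> 'e) \<Rightarrow> ('e \<Rightarrow> 'e \<Rightarrow> real) \<Rightarrow> bool" where
  "asymp_multiplicative smul d \<longleftrightarrow>
     (\<forall>C1>1. \<exists>C2\<ge>0. \<exists>C3\<ge>0. \<forall>(c::'k) x y.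
        norm c * d x y / C1 - C2 * norm c - C3 \<le> d (smul c x) (smul c y) \<and>
        d (smul c x) (smul c y) \<le> C1 * norm c * d x y + C2 * norm c + C3)"

definition linear_subspace :: "('k::real_normed_div_algebra \<Rightarrow> 'e::ab_group_add \<Rightarrow> 'e) \<Rightarrow> 'e set \<Rightarrow> bool" where
  "linear_subspace smul V \<longleftrightarrow> 0 \<in> V \<and> (\<forall>x\<in>V. \<forall>y\<in>V. x + y \<in> V) \<and> (\<forall>a. \<forall>x\<in>V. smul a x \<in> V)"

definition unbounded_on :: "('e \<Rightarrow> 'e \<Rightarrow> real) \<Rightarrow> 'e set \<Rightarrow> bool" where
  "unbounded_on d V \<longleftrightarrow> (\<forall>B. \<exists>x\<in>V. \<exists>y\<in>V. d x y > B)"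

definition unit_sphere :: "'k::real_normed_div_algebra set" where
  "unit_sphere = {u. norm u = 1}"

definition right_haar_U :: "'k::{real_normed_div_algebra,euclidean_space} measure \<Rightarrow> bool" where
  "right_haar_U \<mu> \<longleftrightarrow>
     prob_space \<mu> \<and> sets \<mu> = sets (restrict_space borel unit_sphere) \<and>
     (\<forall>u\<in>unit_sphere. distr \<mu> \<mu> (\<lambda>v. v * u) = \<mu>)"

end

theory Submission
  imports Defs
begin

(* For a norm N asymptotically isometric to d, the three conditions are inherited from the
   exact homogeneity and subadditivity of N.  Conversely, asymptotic multiplicativity makes
   b n = d (n z) 0 / n comparable with b (n m) up to a factor close to 1 and an error O(1/m);
   hence b converges, and its limit is a seminorm: homogeneous by (1), subadditive by (3) with
   two summands, and within a factor C of d z 0 up to a constant.  Condition (3) with two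
   summands also makes d x y comparable with d (x - y) 0, and (2) rules out nonzero vectors of
   norm 0.  Finally, for |u| = 1 the integrand d (n u x) 0 is within a factor C of n N x up to a
   constant, so the averages over the unit sphere, divided by n, tend to N x. *)

lemma divide_le_affine:
  fixes X Y C K t :: real
  assumes "X \<le> C * Y + K" and "t > 0"
  shows "X / t \<le> C * (Y / t) + K / t"
  using divide_right_mono[OF assms(1)] assms(2) by (simp add: add_divide_distrib)

lemma LIMSEQ_le_if_asymp_le:
  fixes f g :: "nat \<Rightarrow> real"
  assumes f: "f \<longlonglongrightarrow> a" and g: "g \<longlonglongrightarrow> b"
    and bound: "\<And>C. C > 1 \<Longrightarrow> \<exists>K. \<forall>n\<ge>1. f n \<le> C * g n + K / n"
  shows "a \<le> b"
proof (rule field_le_mult_one_interval)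
  fix z :: real assume z: "0 < z" "z < 1"
  obtain K where K: "\<forall>n\<ge>1. f n \<le> (1 / z) * g n + K / n"
    using bound[of "1 / z"] z by auto
  have "(\<lambda>n. z * f n) \<longlonglongrightarrow> z * a" by (intro tendsto_intros f)
  moreover have "(\<lambda>n. g n + z * K / n) \<longlonglongrightarrow> b + 0" by (intro tendsto_intros g)
  moreover have "z * f n \<le> g n + z * K / n" if "n \<ge> 1" for n
    using mult_left_mono[OF K[rule_format, OF that], of z] z by (simp add: algebra_simps)
  ultimately show "z * a \<le> b" by (auto intro: LIMSEQ_le)
qed

lemma LIMSEQ_of_asymp_bounds:
  fixes g :: "nat \<Rightarrow> real"
  assumes "L \<ge> 0"
    and bounds: "\<And>C. C > 1 \<Longrightarrow> \<exists>K. \<forall>n\<ge>1. g n \<le> C * L + K / n \<and> L \<le> C * g n + K / n"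
  shows "g \<longlonglongrightarrow> L"
proof (rule tendstoI)
  fix \<epsilon> :: real assume "\<epsilon> > 0"
  define C where "C = 1 + \<epsilon> / (2 * (L + 1))"
  have "C > 1" using \<open>\<epsilon> > 0\<close> \<open>L \<ge> 0\<close> by (simp add: C_def)
  have CL: "(C - 1) * L < \<epsilon> / 2"
    using \<open>\<epsilon> > 0\<close> \<open>L \<ge> 0\<close> by (simp add: C_def field_simps)
  obtain K where K: "\<forall>n\<ge>1. g n \<le> C * L + K / n \<and> L \<le> C * g n + K / n"
    using bounds[OF \<open>C > 1\<close>] by blast
  have "(\<lambda>n. \<bar>K\<bar> / real n) \<longlonglongrightarrow> 0" by (rule lim_const_over_n)
  then have "eventually (\<lambda>n. \<bar>K\<bar> / n < \<epsilon> / 2) sequentially"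
    by (rule order_tendstoD(2)) (use \<open>\<epsilon> > 0\<close> in simp)
  then have "eventually (\<lambda>n. n \<ge> 1 \<and> \<bar>K\<bar> / n < \<epsilon> / 2) sequentially"
    by (intro eventually_conj eventually_ge_at_top)
  then show "eventually (\<lambda>n. dist (g n) L < \<epsilon>) sequentially"
  proof (rule eventually_mono)
    fix n :: nat assume n: "n \<ge> 1 \<and> \<bar>K\<bar> / n < \<epsilon> / 2"
    have Kn: "K / n \<le> \<bar>K\<bar> / n" by (simp add: divide_right_mono)
    have up: "g n \<le> C * L + \<bar>K\<bar> / n"
      using K n Kn by fastforce
    have "L \<le> C * g n + \<bar>K\<bar> / n"
      using K n Kn by fastforce
    then have "L / C \<le> g n + \<bar>K\<bar> / n / C"
      using \<open>C > 1\<close> by (simp add: field_simps)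
    moreover have "\<bar>K\<bar> / n / C \<le> \<bar>K\<bar> / n"
      using divide_left_mono[of 1 C "\<bar>K\<bar> / n"] \<open>C > 1\<close> by simp
    moreover have "L - L / C = (C - 1) * L / C"
      using \<open>C > 1\<close> by (simp add: field_simps)
    moreover have "(C - 1) * L / C \<le> (C - 1) * L"
      using divide_left_mono[of 1 C "(C - 1) * L"] \<open>C > 1\<close> \<open>L \<ge> 0\<close> by simp
    ultimately show "dist (g n) L < \<epsilon>"
      using up CL n unfolding dist_real_def abs_less_iff left_diff_distrib by linarith
  qed
qed

lemma convergent_if_comparable_to_multiples:
  fixes b :: "nat \<Rightarrow> real"
  assumes nonneg: "\<And>n. b n \<ge> 0"
    and comparable: "\<And>C. C > 1 \<Longrightarrow> \<exists>K\<ge>0. \<forall>m\<ge>1. \<forall>n\<ge>1.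
          b (n * m) \<le> C * b m + K / m \<and> b m \<le> C * b (n * m) + K / m"
  shows "convergent b"
proof -
  obtain K1 where "\<forall>m\<ge>1. \<forall>n\<ge>1. b (n * m) \<le> 2 * b m + K1 / m"
    using comparable[of 2] by auto
  then have bounded: "b n \<le> 2 * b 1 + K1" if "n \<ge> 1" for n
    using that by (metis div_by_1 mult.right_neutral of_nat_1 order_refl)
  define B where "B = 2 * b 1 + K1"
  have "B \<ge> 0" using bounded[of 1] nonneg[of 1] by (simp add: B_def)
  have "Cauchy b"
  proof (rule CauchyI)
    fix \<epsilon> :: real assume "\<epsilon> > 0"
    define C where "C = sqrt (1 + \<epsilon> / (2 * (B + 1)))"
    have "C > 1" using \<open>\<epsilon> > 0\<close> \<open>B \<ge> 0\<close> by (simp add: C_def)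
    have CB: "(C * C - 1) * B < \<epsilon> / 2"
      using \<open>\<epsilon> > 0\<close> \<open>B \<ge> 0\<close> by (simp add: C_def field_simps)
    obtain K where "K \<ge> 0" and K: "\<forall>m\<ge>1. \<forall>n\<ge>1.
          b (n * m) \<le> C * b m + K / m \<and> b m \<le> C * b (n * m) + K / m"
      using comparable[OF \<open>C > 1\<close>] by blast
    have "(\<lambda>n. (C + 1) * K / real n) \<longlonglongrightarrow> 0" by (rule lim_const_over_n)
    then have "eventually (\<lambda>n. (C + 1) * K / n < \<epsilon> / 2) sequentially"
      by (rule order_tendstoD(2)) (use \<open>\<epsilon> > 0\<close> in simp)
    then have "eventually (\<lambda>n. n \<ge> 1 \<and> (C + 1) * K / n < \<epsilon> / 2) sequentially"
      by (intro eventually_conj eventually_ge_at_top)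
    then obtain M :: nat where "M \<ge> 1" and M: "(C + 1) * K / M < \<epsilon> / 2"
      unfolding eventually_sequentially by blast
    have one_sided: "b n - b m < \<epsilon>" if "m \<ge> M" "n \<ge> M" for m n
    proof -
      \<comment> \<open>compare \<open>b n\<close> with \<open>b m\<close> through the common multiple \<open>m * n\<close>\<close>
      have "b (m * n) \<le> C * b m + K / m"
        using K[rule_format, of m n] that \<open>M \<ge> 1\<close> by (simp add: mult.commute)
      have "b n \<le> C * b (m * n) + K / n"
        using K[rule_format, of n m] that \<open>M \<ge> 1\<close> by simp
      also have "\<dots> \<le> C * (C * b m + K / m) + K / n"
        using \<open>b (m * n) \<le> C * b m + K / m\<close> \<open>C > 1\<close> by simp
      also have "\<dots> = b m + (C * C - 1) * b m + (C * K / m + K / n)"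
        by (simp add: algebra_simps)
      also have "\<dots> \<le> b m + (C * C - 1) * B + (C * K / M + K / M)"
        using bounded[of m] that \<open>M \<ge> 1\<close> \<open>K \<ge> 0\<close> \<open>C > 1\<close>
        by (intro add_mono mult_left_mono divide_left_mono) (auto simp: B_def less_1_mult less_imp_le)
      also have "\<dots> = b m + (C * C - 1) * B + (C + 1) * K / M"
        by (simp add: add_divide_distrib distrib_right)
      finally show ?thesis using CB M by linarith
    qed
    show "\<exists>M. \<forall>m\<ge>M. \<forall>n\<ge>M. norm (b m - b n) < \<epsilon>"
      using one_sided by (intro exI[of _ M]) (auto simp: abs_less_iff)
  qed
  then show ?thesis by (simp add: Cauchy_convergent_iff)
qed

lemma asymp_isometric_iff_bounds:
  "asymp_isometric d \<delta> \<longleftrightarrow>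
     (\<forall>C>1. \<exists>K\<ge>0. \<forall>x y. d x y \<le> C * \<delta> x y + K \<and> \<delta> x y \<le> C * d x y + K)"
proof
  assume iso: "asymp_isometric d \<delta>"
  show "\<forall>C>1. \<exists>K\<ge>0. \<forall>x y. d x y \<le> C * \<delta> x y + K \<and> \<delta> x y \<le> C * d x y + K"
  proof (intro allI impI)
    fix C :: real assume "C > 1"
    then obtain K where "K \<ge> 0" and K: "\<forall>x y. \<delta> x y / C - K \<le> d x y \<and> d x y \<le> C * \<delta> x y + K"
      using iso unfolding asymp_isometric_def by blast
    have "K \<le> C * K" using \<open>C > 1\<close> \<open>K \<ge> 0\<close> by (simp add: mult_le_cancel_right1)
    moreover have "\<delta> x y \<le> C * d x y + C * K" for x y
      using K \<open>C > 1\<close> by (simp add: field_simps)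
    ultimately have "d x y \<le> C * \<delta> x y + C * K \<and> \<delta> x y \<le> C * d x y + C * K" for x y
      using K by (meson add_left_mono order_trans)
    then show "\<exists>K\<ge>0. \<forall>x y. d x y \<le> C * \<delta> x y + K \<and> \<delta> x y \<le> C * d x y + K"
      using \<open>C > 1\<close> \<open>K \<ge> 0\<close> by (intro exI[of _ "C * K"]) auto
  qed
next
  assume bounds: "\<forall>C>1. \<exists>K\<ge>0. \<forall>x y. d x y \<le> C * \<delta> x y + K \<and> \<delta> x y \<le> C * d x y + K"
  show "asymp_isometric d \<delta>"
    unfolding asymp_isometric_def
  proof (intro allI impI)
    fix C :: real assume "C > 1"
    then obtain K where "K \<ge> 0" and K: "\<forall>x y. d x y \<le> C * \<delta> x y + K \<and> \<delta> x y \<le> C * d x y + K"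
      using bounds by blast
    have "\<delta> x y / C - K \<le> d x y" for x y
    proof -
      have "\<delta> x y / C \<le> d x y + K / C"
        using K \<open>C > 1\<close> by (simp add: field_simps)
      moreover have "K / C \<le> K"
        using divide_left_mono[of 1 C K] \<open>C > 1\<close> \<open>K \<ge> 0\<close> by simp
      ultimately show ?thesis by linarith
    qed
    then show "\<exists>K\<ge>0. \<forall>x y. \<delta> x y / C - K \<le> d x y \<and> d x y \<le> C * \<delta> x y + K"
      using K \<open>K \<ge> 0\<close> by blast
  qed
qed

lemma asymp_isometric_trans:
  assumes "asymp_isometric d \<delta>" and "asymp_isometric \<delta> \<rho>"
  shows "asymp_isometric d \<rho>"
  unfolding asymp_isometric_iff_bounds
proof (intro allI impI)
  fix C :: real assume "C > 1"
  define c where "c = sqrt C"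
  have "c > 1" "c * c = C" using \<open>C > 1\<close> by (auto simp: c_def)
  obtain K1 K2 where "K1 \<ge> 0" "K2 \<ge> 0"
    and K1: "\<forall>x y. d x y \<le> c * \<delta> x y + K1 \<and> \<delta> x y \<le> c * d x y + K1"
    and K2: "\<forall>x y. \<delta> x y \<le> c * \<rho> x y + K2 \<and> \<rho> x y \<le> c * \<delta> x y + K2"
    using assms \<open>c > 1\<close> unfolding asymp_isometric_iff_bounds by meson
  have "d x y \<le> C * \<rho> x y + c * (K1 + K2) \<and> \<rho> x y \<le> C * d x y + c * (K1 + K2)" for x y
  proof
    have "d x y \<le> c * (c * \<rho> x y + K2) + K1"
      using K1 K2 \<open>c > 1\<close> by (smt (verit) mult_left_mono)
    also have "\<dots> \<le> C * \<rho> x y + c * (K1 + K2)"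
      unfolding \<open>c * c = C\<close>[symmetric] using \<open>c > 1\<close> \<open>K1 \<ge> 0\<close>
      by (simp add: algebra_simps mult_le_cancel_left1)
    finally show "d x y \<le> C * \<rho> x y + c * (K1 + K2)" .
    have "\<rho> x y \<le> c * (c * d x y + K1) + K2"
      using K1 K2 \<open>c > 1\<close> by (smt (verit) mult_left_mono)
    also have "\<dots> \<le> C * d x y + c * (K1 + K2)"
      unfolding \<open>c * c = C\<close>[symmetric] using \<open>c > 1\<close> \<open>K2 \<ge> 0\<close>
      by (simp add: algebra_simps mult_le_cancel_left1)
    finally show "\<rho> x y \<le> C * d x y + c * (K1 + K2)" .
  qed
  then show "\<exists>K\<ge>0. \<forall>x y. d x y \<le> C * \<rho> x y + K \<and> \<rho> x y \<le> C * d x y + K"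
    using \<open>c > 1\<close> \<open>K1 \<ge> 0\<close> \<open>K2 \<ge> 0\<close> by (intro exI[of _ "c * (K1 + K2)"]) auto
qed

lemma asymp_multiplicative_iff_bounds:
  "asymp_multiplicative smul d \<longleftrightarrow>
     (\<forall>C>1. \<exists>K\<ge>0. \<forall>c x y.
        d (smul c x) (smul c y) \<le> C * norm c * d x y + K * (norm c + 1) \<and>
        norm c * d x y \<le> C * d (smul c x) (smul c y) + K * (norm c + 1))"
proof
  assume am: "asymp_multiplicative smul d"
  show "\<forall>C>1. \<exists>K\<ge>0. \<forall>c x y.
        d (smul c x) (smul c y) \<le> C * norm c * d x y + K * (norm c + 1) \<and>
        norm c * d x y \<le> C * d (smul c x) (smul c y) + K * (norm c + 1)"
  proof (intro allI impI)
    fix C :: real assume "C > 1"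
    then obtain C2 C3 where "C2 \<ge> 0" "C3 \<ge> 0" and H: "\<forall>c x y.
        norm c * d x y / C - C2 * norm c - C3 \<le> d (smul c x) (smul c y) \<and>
        d (smul c x) (smul c y) \<le> C * norm c * d x y + C2 * norm c + C3"
      using am unfolding asymp_multiplicative_def by blast
    define K where "K = C * (C2 + C3)"
    have "C2 \<le> C * C2" "C3 \<le> C * C3" "0 \<le> C * C2" "0 \<le> C * C3"
      using \<open>C > 1\<close> \<open>C2 \<ge> 0\<close> \<open>C3 \<ge> 0\<close> by (simp_all add: mult_le_cancel_right1)
    then have "C2 \<le> K" "C * C2 \<le> K" "C3 \<le> K" "C * C3 \<le> K"
      by (simp_all add: K_def distrib_left)
    then have "C2 * norm c + C3 \<le> K * (norm c + 1)" "C * C2 * norm c + C * C3 \<le> K * (norm c + 1)"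
      for c :: 'a
      by (auto simp: distrib_left intro!: add_mono mult_right_mono)
    moreover have "norm c * d x y \<le> C * d (smul c x) (smul c y) + C * C2 * norm c + C * C3" for c x y
      using H[rule_format, of c x y] \<open>C > 1\<close> by (simp add: field_simps)
    ultimately show "\<exists>K\<ge>0. \<forall>c x y.
        d (smul c x) (smul c y) \<le> C * norm c * d x y + K * (norm c + 1) \<and>
        norm c * d x y \<le> C * d (smul c x) (smul c y) + K * (norm c + 1)"
      using H \<open>C2 \<le> K\<close> \<open>C2 \<ge> 0\<close> by (intro exI[of _ K] conjI allI; smt (verit))
  qed
next
  assume bounds: "\<forall>C>1. \<exists>K\<ge>0. \<forall>c x y.
        d (smul c x) (smul c y) \<le> C * norm c * d x y + K * (norm c + 1) \<and>
        norm c * d x y \<le> C * d (smul c x) (smul c y) + K * (norm c + 1)"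
  show "asymp_multiplicative smul d"
    unfolding asymp_multiplicative_def
  proof (intro allI impI)
    fix C :: real assume "C > 1"
    then obtain K where "K \<ge> 0" and K: "\<forall>c x y.
        d (smul c x) (smul c y) \<le> C * norm c * d x y + K * (norm c + 1) \<and>
        norm c * d x y \<le> C * d (smul c x) (smul c y) + K * (norm c + 1)"
      using bounds by blast
    have "norm c * d x y / C - K * norm c - K \<le> d (smul c x) (smul c y)" for c x y
    proof -
      have "norm c * d x y / C \<le> d (smul c x) (smul c y) + K * (norm c + 1) / C"
        using K \<open>C > 1\<close> by (simp add: field_simps)
      moreover have "K * (norm c + 1) / C \<le> K * (norm c + 1)"
        using divide_left_mono[of 1 C "K * (norm c + 1)"] \<open>C > 1\<close> \<open>K \<ge> 0\<close> by simp
      ultimately show ?thesis by (simp add: algebra_simps)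
    qed
    then show "\<exists>C2\<ge>0. \<exists>C3\<ge>0. \<forall>c x y.
        norm c * d x y / C - C2 * norm c - C3 \<le> d (smul c x) (smul c y) \<and>
        d (smul c x) (smul c y) \<le> C * norm c * d x y + C2 * norm c + C3"
      using K \<open>K \<ge> 0\<close> by (intro exI[of _ K] conjI allI) (auto simp: algebra_simps)
  qed
qed

definition asymp_subadditive :: "('e::ab_group_add \<Rightarrow> 'e \<Rightarrow> real) \<Rightarrow> bool" where
  "asymp_subadditive d \<longleftrightarrow>
     (\<forall>C1>1. \<exists>C0\<ge>0. \<forall>n\<ge>2. \<forall>x y :: nat \<Rightarrow> 'e.
        d (\<Sum>i<n. x i) (\<Sum>i<n. y i) \<le> C1 * (\<Sum>i<n. d (x i) (y i)) + real n * C0)"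

lemma asymp_subadditive_add:
  assumes "asymp_subadditive d" and "C > 1"
  obtains K where "K \<ge> 0" and "\<And>p q r s. d (p + q) (r + s) \<le> C * (d p r + d q s) + K"
proof -
  obtain C0 where "C0 \<ge> 0" and C0: "\<forall>n\<ge>2. \<forall>x y :: nat \<Rightarrow> _.
      d (\<Sum>i<n. x i) (\<Sum>i<n. y i) \<le> C * (\<Sum>i<n. d (x i) (y i)) + real n * C0"
    using assms unfolding asymp_subadditive_def by blast
  have "d (p + q) (r + s) \<le> C * (d p r + d q s) + 2 * C0" for p q r s
    using C0[rule_format, of 2 "\<lambda>i. if i = 0 then p else q" "\<lambda>i. if i = 0 then r else s"]
    by (simp add: numeral_2_eq_2 lessThan_Suc add.commute)
  with \<open>C0 \<ge> 0\<close> show ?thesis by (intro that[of "2 * C0"]) auto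
qed

context
  fixes smul :: "'k::real_normed_div_algebra \<Rightarrow> 'e::ab_group_add \<Rightarrow> 'e"
  assumes module: "left_module smul"
begin

lemma smul_add_right: "smul a (x + y) = smul a x + smul a y"
  using module unfolding left_module_def by blast

lemma smul_add_left: "smul (a + b) x = smul a x + smul b x"
  using module unfolding left_module_def by blast

lemma smul_smul: "smul a (smul b x) = smul (a * b) x"
  using module unfolding left_module_def by metis

lemma smul_one: "smul 1 x = x"
  using module unfolding left_module_def by blast

lemma smul_zero_right: "smul a 0 = 0"
  using smul_add_right[of a 0 0] by simp

lemma smul_zero_left: "smul 0 x = 0"
  using smul_add_left[of 0 0 x] by simp

lemma smul_diff_right: "smul a (x - y) = smul a x - smul a y"
  using smul_add_right[of a "x - y" y] by (simp add: eq_diff_eq)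

lemma smul_diff_left: "smul (a - b) x = smul a x - smul b x"
  using smul_add_left[of "a - b" b x] by (simp add: eq_diff_eq)

lemma smul_of_nat_commute: "smul a (smul (of_nat n) x) = smul (of_nat n) (smul a x)"
  by (simp add: smul_smul mult_of_nat_commute)

lemma linear_subspace_line: "linear_subspace smul (range (\<lambda>a. smul a z))"
  unfolding linear_subspace_def
  by (auto simp: smul_smul smul_add_left[symmetric] intro: range_eqI[of _ _ 0] smul_zero_left[symmetric])

end

context
  fixes smul :: "'k::real_normed_div_algebra \<Rightarrow> 'e::ab_group_add \<Rightarrow> 'e" and N :: "'e \<Rightarrow> real"
  assumes norm: "is_norm smul N"
begin

lemma is_norm_zero: "N 0 = 0"
  using norm unfolding is_norm_def by blast

lemma is_norm_sum_le: "N (\<Sum>i\<in>A. z i) \<le> (\<Sum>i\<in>A. N (z i))"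
proof (induction A rule: infinite_finite_induct)
  case (insert i A)
  have "N (z i + (\<Sum>i\<in>A. z i)) \<le> N (z i) + N (\<Sum>i\<in>A. z i)"
    using norm unfolding is_norm_def by blast
  with insert show ?case by simp
qed (simp_all add: is_norm_zero)

context
  fixes d :: "'e \<Rightarrow> 'e \<Rightarrow> real"
  assumes iso: "asymp_isometric d (\<lambda>x y. N (x - y))"
begin

lemma asymp_multiplicative_of_norm:
  assumes module: "left_module smul"
  shows "asymp_multiplicative smul d"
  unfolding asymp_multiplicative_iff_bounds
proof (intro allI impI)
  fix C :: real assume "C > 1"
  define c where "c = sqrt C"
  have "c > 1" "c * c = C" using \<open>C > 1\<close> by (auto simp: c_def)
  obtain K where "K \<ge> 0" and K: "\<forall>x y. d x y \<le> c * N (x - y) + K \<and> N (x - y) \<le> c * d x y + K"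
    using iso \<open>c > 1\<close> unfolding asymp_isometric_iff_bounds by blast
  have "K \<le> c * K" using \<open>c > 1\<close> \<open>K \<ge> 0\<close> by (simp add: mult_le_cancel_right1)
  have "d (smul a x) (smul a y) \<le> C * norm a * d x y + c * K * (norm a + 1) \<and>
        norm a * d x y \<le> C * d (smul a x) (smul a y) + c * K * (norm a + 1)" for a x y
  proof
    have scale: "N (smul a x - smul a y) = norm a * N (x - y)"
      using norm module by (simp add: is_norm_def smul_diff_right[symmetric])
    have "d (smul a x) (smul a y) \<le> c * (norm a * N (x - y)) + K"
      using K scale by metis
    also have "\<dots> \<le> c * (norm a * (c * d x y + K)) + K"
      using K \<open>c > 1\<close> by (intro add_right_mono mult_left_mono) auto
    also have "\<dots> = C * norm a * d x y + c * K * norm a + K"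
      unfolding \<open>c * c = C\<close>[symmetric] by (simp add: algebra_simps)
    also have "\<dots> \<le> C * norm a * d x y + c * K * (norm a + 1)"
      using \<open>c > 1\<close> \<open>K \<ge> 0\<close> by (simp add: distrib_left mult_le_cancel_right1)
    finally show "d (smul a x) (smul a y) \<le> C * norm a * d x y + c * K * (norm a + 1)" .
    have "norm a * d x y \<le> norm a * (c * N (x - y) + K)"
      using K by (intro mult_left_mono) auto
    also have "\<dots> = c * N (smul a x - smul a y) + K * norm a"
      using scale by (simp add: algebra_simps)
    also have "\<dots> \<le> c * (c * d (smul a x) (smul a y) + K) + K * norm a"
      using K \<open>c > 1\<close> by (intro add_right_mono mult_left_mono) auto
    also have "\<dots> = C * d (smul a x) (smul a y) + c * K + K * norm a"
      unfolding \<open>c * c = C\<close>[symmetric] by (simp add: algebra_simps)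
    also have "\<dots> \<le> C * d (smul a x) (smul a y) + c * K * (norm a + 1)"
      using mult_right_mono[OF \<open>K \<le> c * K\<close> norm_ge_zero[of a]] by (simp add: algebra_simps)
    finally show "norm a * d x y \<le> C * d (smul a x) (smul a y) + c * K * (norm a + 1)" .
  qed
  then show "\<exists>K\<ge>0. \<forall>a x y.
      d (smul a x) (smul a y) \<le> C * norm a * d x y + K * (norm a + 1) \<and>
      norm a * d x y \<le> C * d (smul a x) (smul a y) + K * (norm a + 1)"
    using \<open>c > 1\<close> \<open>K \<ge> 0\<close> by (intro exI[of _ "c * K"]) auto
qed

lemma unbounded_on_subspace_of_norm:
  assumes "linear_subspace smul V" and "V \<noteq> {0}"
  shows "unbounded_on d V"
  unfolding unbounded_on_def
proof
  fix B :: real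
  obtain v where "v \<in> V" "v \<noteq> 0"
    using assms unfolding linear_subspace_def by blast
  then have "N v > 0"
    using norm unfolding is_norm_def by (metis less_eq_real_def)
  obtain K where K: "\<forall>x y. N (x - y) \<le> 2 * d x y + K"
    using iso[unfolded asymp_isometric_iff_bounds, rule_format, of 2] by auto
  obtain n where n: "2 * B + K < real n * N v"
    using ex_less_of_nat_mult[OF \<open>N v > 0\<close>] by blast
  have "real n * N v = N (smul (of_nat n) v - 0)"
    using norm unfolding is_norm_def by simp
  then have "B < d (smul (of_nat n) v) 0"
    using K[rule_format, of "smul (of_nat n) v" 0] n by linarith
  moreover have "smul (of_nat n) v \<in> V" "0 \<in> V"
    using assms(1) \<open>v \<in> V\<close> unfolding linear_subspace_def by auto
  ultimately show "\<exists>x\<in>V. \<exists>y\<in>V. B < d x y" by blast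
qed

lemma asymp_subadditive_of_norm: "asymp_subadditive d"
  unfolding asymp_subadditive_def
proof (intro allI impI)
  fix C :: real assume "C > 1"
  define c where "c = sqrt C"
  have "c > 1" "c * c = C" using \<open>C > 1\<close> by (auto simp: c_def)
  obtain K where "K \<ge> 0" and K: "\<forall>x y. d x y \<le> c * N (x - y) + K \<and> N (x - y) \<le> c * d x y + K"
    using iso \<open>c > 1\<close> unfolding asymp_isometric_iff_bounds by blast
  have "d (\<Sum>i<n. x i) (\<Sum>i<n. y i) \<le> C * (\<Sum>i<n. d (x i) (y i)) + real n * (c * K + K)"
    if "n \<ge> 2" for n and x y :: "nat \<Rightarrow> 'e"
  proof -
    have "N (\<Sum>i<n. x i - y i) \<le> (\<Sum>i<n. N (x i - y i))"
      by (rule is_norm_sum_le)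
    also have "\<dots> \<le> (\<Sum>i<n. c * d (x i) (y i) + K)"
      using K by (intro sum_mono) blast
    finally have sum_bound: "N (\<Sum>i<n. x i - y i) \<le> (\<Sum>i<n. c * d (x i) (y i) + K)" .
    have "d (\<Sum>i<n. x i) (\<Sum>i<n. y i) \<le> c * N ((\<Sum>i<n. x i) - (\<Sum>i<n. y i)) + K"
      using K by blast
    also have "\<dots> \<le> c * (\<Sum>i<n. c * d (x i) (y i) + K) + K"
      using sum_bound \<open>c > 1\<close> by (simp add: sum_subtractf)
    also have "\<dots> = C * (\<Sum>i<n. d (x i) (y i)) + real n * (c * K) + K"
      unfolding \<open>c * c = C\<close>[symmetric] by (simp add: sum.distrib sum_distrib_left algebra_simps)
    also have "\<dots> \<le> C * (\<Sum>i<n. d (x i) (y i)) + real n * (c * K + K)"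
      using that \<open>K \<ge> 0\<close> by (simp add: distrib_left mult_le_cancel_right1)
    finally show ?thesis .
  qed
  then show "\<exists>C0\<ge>0. \<forall>n\<ge>2. \<forall>x y :: nat \<Rightarrow> 'e.
      d (\<Sum>i<n. x i) (\<Sum>i<n. y i) \<le> C * (\<Sum>i<n. d (x i) (y i)) + real n * C0"
    using \<open>c > 1\<close> \<open>K \<ge> 0\<close> by (intro exI[of _ "c * K + K"]) auto
qed

end

end

definition growth_ratio ::
  "('k::real_normed_div_algebra \<Rightarrow> 'e::ab_group_add \<Rightarrow> 'e) \<Rightarrow> ('e \<Rightarrow> 'e \<Rightarrow> real) \<Rightarrow> 'e \<Rightarrow> nat \<Rightarrow> real"
  where "growth_ratio smul d z n = d (smul (of_nat n) z) 0 / real n"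

(* Unlike the paper's formula, there is no average over the unit sphere: asymptotic
   multiplicativity alone makes the limit exist. *)
definition asymptotic_norm ::
  "('k::real_normed_div_algebra \<Rightarrow> 'e::ab_group_add \<Rightarrow> 'e) \<Rightarrow> ('e \<Rightarrow> 'e \<Rightarrow> real) \<Rightarrow> 'e \<Rightarrow> real"
  where "asymptotic_norm smul d z = lim (growth_ratio smul d z)"

context
  fixes smul :: "'k::real_normed_div_algebra \<Rightarrow> 'e::ab_group_add \<Rightarrow> 'e" and d :: "'e \<Rightarrow> 'e \<Rightarrow> real"
  assumes module: "left_module smul" and metric: "Metric_space UNIV d"
    and mult: "asymp_multiplicative smul d"
begin

lemma growth_ratio_nonneg: "growth_ratio smul d z n \<ge> 0"
  using metric by (simp add: growth_ratio_def Metric_space.nonneg)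

lemma growth_ratio_comparable_to_multiples:
  assumes "C > 1"
  shows "\<exists>K\<ge>0. \<forall>z. \<forall>m\<ge>1. \<forall>n\<ge>1.
    growth_ratio smul d z (n * m) \<le> C * growth_ratio smul d z m + K / m \<and>
    growth_ratio smul d z m \<le> C * growth_ratio smul d z (n * m) + K / m"
proof -
  obtain K where "K \<ge> 0" and K: "\<forall>c x y.
      d (smul c x) (smul c y) \<le> C * norm c * d x y + K * (norm c + 1) \<and>
      norm c * d x y \<le> C * d (smul c x) (smul c y) + K * (norm c + 1)"
    using mult \<open>C > 1\<close> unfolding asymp_multiplicative_iff_bounds by blast
  have "growth_ratio smul d z (n * m) \<le> C * growth_ratio smul d z m + 2 * K / m \<and>
        growth_ratio smul d z m \<le> C * growth_ratio smul d z (n * m) + 2 * K / m"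
    if "m \<ge> 1" "n \<ge> 1" for z m n
  proof -
    define A where "A = d (smul (of_nat m) z) 0"
    define X where "X = d (smul (of_nat (n * m)) z) 0"
    have "K * (real n + 1) \<le> 2 * K * n"
      using mult_left_mono[of 1 "real n" K] \<open>n \<ge> 1\<close> \<open>K \<ge> 0\<close> by (simp add: algebra_simps)
    moreover have "X \<le> C * (n * A) + K * (real n + 1) \<and> n * A \<le> C * X + K * (real n + 1)"
      using K[rule_format, of "of_nat n" "smul (of_nat m) z" 0]
      by (simp add: A_def X_def smul_smul[OF module] smul_zero_right[OF module] mult.assoc)
    ultimately have "X \<le> C * (n * A) + 2 * K * n" "n * A \<le> C * X + 2 * K * n"
      by linarith+
    then show ?thesis
      using that unfolding growth_ratio_def A_def[symmetric] X_def[symmetric]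
      by (simp add: field_simps)
  qed
  with \<open>K \<ge> 0\<close> show ?thesis by (intro exI[of _ "2 * K"]) auto
qed

lemma growth_ratio_LIMSEQ: "growth_ratio smul d z \<longlonglongrightarrow> asymptotic_norm smul d z"
proof -
  have "convergent (growth_ratio smul d z)"
  proof (rule convergent_if_comparable_to_multiples[OF growth_ratio_nonneg])
    fix C :: real assume "C > 1"
    then obtain K where "K \<ge> 0" and K: "\<forall>z. \<forall>m\<ge>1. \<forall>n\<ge>1.
        growth_ratio smul d z (n * m) \<le> C * growth_ratio smul d z m + K / m \<and>
        growth_ratio smul d z m \<le> C * growth_ratio smul d z (n * m) + K / m"
      using growth_ratio_comparable_to_multiples by blast
    then show "\<exists>K\<ge>0. \<forall>m\<ge>1. \<forall>n\<ge>1.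
        growth_ratio smul d z (n * m) \<le> C * growth_ratio smul d z m + K / m \<and>
        growth_ratio smul d z m \<le> C * growth_ratio smul d z (n * m) + K / m"
      using K[THEN spec[of _ z]] by blast
  qed
  then show ?thesis
    unfolding asymptotic_norm_def by (simp add: convergent_LIMSEQ_iff)
qed

lemma asymp_isometric_dist_zero_asymptotic_norm:
  "asymp_isometric (\<lambda>x y. d (x - y) 0) (\<lambda>x y. asymptotic_norm smul d (x - y))"
  unfolding asymp_isometric_iff_bounds
proof (intro allI impI)
  fix C :: real assume "C > 1"
  then obtain K where "K \<ge> 0" and K: "\<forall>z. \<forall>m\<ge>1. \<forall>n\<ge>1.
    growth_ratio smul d z (n * m) \<le> C * growth_ratio smul d z m + K / m \<and>
    growth_ratio smul d z m \<le> C * growth_ratio smul d z (n * m) + K / m"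
    using growth_ratio_comparable_to_multiples by blast
  have "d z 0 \<le> C * asymptotic_norm smul d z + K \<and> asymptotic_norm smul d z \<le> C * d z 0 + K" for z
  proof
    have "growth_ratio smul d z 1 = d z 0"
      by (simp add: growth_ratio_def smul_one[OF module])
    then have bounds: "\<forall>n\<ge>1. growth_ratio smul d z n \<le> C * d z 0 + K \<and>
        d z 0 \<le> C * growth_ratio smul d z n + K"
      using K[rule_format, where z = z and m = 1] by simp
    have "(\<lambda>n. C * growth_ratio smul d z n + K) \<longlonglongrightarrow> C * asymptotic_norm smul d z + K"
      by (intro tendsto_intros growth_ratio_LIMSEQ)
    then show "d z 0 \<le> C * asymptotic_norm smul d z + K"
      using bounds by (intro LIMSEQ_le_const) auto
    show "asymptotic_norm smul d z \<le> C * d z 0 + K"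
      using bounds by (intro LIMSEQ_le_const2[OF growth_ratio_LIMSEQ]) auto
  qed
  with \<open>K \<ge> 0\<close> show "\<exists>K\<ge>0. \<forall>x y. d (x - y) 0 \<le> C * asymptotic_norm smul d (x - y) + K \<and>
      asymptotic_norm smul d (x - y) \<le> C * d (x - y) 0 + K"
    by blast
qed

lemma asymptotic_norm_scale: "asymptotic_norm smul d (smul a z) = norm a * asymptotic_norm smul d z"
proof -
  have bounds: "\<exists>K. \<forall>n\<ge>1.
      growth_ratio smul d (smul a z) n \<le> C * (norm a * growth_ratio smul d z n) + K / n \<and>
      norm a * growth_ratio smul d z n \<le> C * growth_ratio smul d (smul a z) n + K / n"
    if "C > 1" for C
  proof -
    obtain K where K: "\<forall>c x y.
        d (smul c x) (smul c y) \<le> C * norm c * d x y + K * (norm c + 1) \<and>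
        norm c * d x y \<le> C * d (smul c x) (smul c y) + K * (norm c + 1)"
      using mult \<open>C > 1\<close> unfolding asymp_multiplicative_iff_bounds by blast
    have "growth_ratio smul d (smul a z) n \<le> C * (norm a * growth_ratio smul d z n) + K * (norm a + 1) / n \<and>
      norm a * growth_ratio smul d z n \<le> C * growth_ratio smul d (smul a z) n + K * (norm a + 1) / n"
      if "n \<ge> 1" for n
    proof -
      define X where "X = d (smul (of_nat n) (smul a z)) 0"
      define Y where "Y = d (smul (of_nat n) z) 0"
      have "X \<le> C * (norm a * Y) + K * (norm a + 1)" "norm a * Y \<le> C * X + K * (norm a + 1)"
        using K[rule_format, of a "smul (of_nat n) z" 0]
        by (simp_all add: X_def Y_def smul_of_nat_commute[OF module] smul_zero_right[OF module] mult.assoc)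
      moreover have "real n > 0" using that by simp
      ultimately have "X / n \<le> C * (norm a * Y / n) + K * (norm a + 1) / n"
        "norm a * Y / n \<le> C * (X / n) + K * (norm a + 1) / n"
        by (simp_all only: divide_le_affine)
      then show ?thesis
        unfolding growth_ratio_def X_def[symmetric] Y_def[symmetric] by simp
    qed
    then show ?thesis by blast
  qed
  have lim: "(\<lambda>n. norm a * growth_ratio smul d z n) \<longlonglongrightarrow> norm a * asymptotic_norm smul d z"
    by (intro tendsto_intros growth_ratio_LIMSEQ)
  show ?thesis
  proof (rule antisym)
    show "asymptotic_norm smul d (smul a z) \<le> norm a * asymptotic_norm smul d z"
      by (rule LIMSEQ_le_if_asymp_le[OF growth_ratio_LIMSEQ lim]) (use bounds in blast)
    show "norm a * asymptotic_norm smul d z \<le> asymptotic_norm smul d (smul a z)"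
      by (rule LIMSEQ_le_if_asymp_le[OF lim growth_ratio_LIMSEQ]) (use bounds in blast)
  qed
qed

context
  assumes subadd: "asymp_subadditive d"
begin

lemma asymptotic_norm_triangle:
  "asymptotic_norm smul d (x + y) \<le> asymptotic_norm smul d x + asymptotic_norm smul d y"
proof (rule LIMSEQ_le_if_asymp_le[OF growth_ratio_LIMSEQ])
  show "(\<lambda>n. growth_ratio smul d x n + growth_ratio smul d y n) \<longlonglongrightarrow>
      asymptotic_norm smul d x + asymptotic_norm smul d y"
    by (intro tendsto_intros growth_ratio_LIMSEQ)
  fix C :: real assume "C > 1"
  then obtain K where K: "\<And>p q r s. d (p + q) (r + s) \<le> C * (d p r + d q s) + K"
    using asymp_subadditive_add[OF subadd] by metis
  have "growth_ratio smul d (x + y) n \<le> C * (growth_ratio smul d x n + growth_ratio smul d y n) + K / n"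
    if "n \<ge> 1" for n
  proof -
    have "d (smul (of_nat n) (x + y)) 0 \<le>
        C * (d (smul (of_nat n) x) 0 + d (smul (of_nat n) y) 0) + K"
      using K[of "smul (of_nat n) x" "smul (of_nat n) y" 0 0] by (simp add: smul_add_right[OF module])
    then have "d (smul (of_nat n) (x + y)) 0 / n \<le>
        C * ((d (smul (of_nat n) x) 0 + d (smul (of_nat n) y) 0) / n) + K / n"
      by (rule divide_le_affine) (use that in simp)
    then show ?thesis
      by (simp add: growth_ratio_def add_divide_distrib)
  qed
  then show "\<exists>K. \<forall>n\<ge>1. growth_ratio smul d (x + y) n \<le>
      C * (growth_ratio smul d x n + growth_ratio smul d y n) + K / n"
    by blast
qed

lemma asymp_isometric_dist_zero: "asymp_isometric d (\<lambda>x y. d (x - y) 0)"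
  unfolding asymp_isometric_iff_bounds
proof (intro allI impI)
  fix C :: real assume "C > 1"
  then obtain K where "K \<ge> 0" and K: "\<And>p q r s. d (p + q) (r + s) \<le> C * (d p r + d q s) + K"
    using asymp_subadditive_add[OF subadd] by metis
  have "d x y \<le> C * d (x - y) 0 + K \<and> d (x - y) 0 \<le> C * d x y + K" for x y
  proof -
    have "d y y = 0" "d (- y) (- y) = 0"
      using metric by (simp_all add: Metric_space.zero)
    then show ?thesis
      using K[of "x - y" y 0 y] K[of x "- y" y "- y"] by simp
  qed
  with \<open>K \<ge> 0\<close> show "\<exists>K\<ge>0. \<forall>x y. d x y \<le> C * d (x - y) 0 + K \<and> d (x - y) 0 \<le> C * d x y + K"
    by blast
qed

lemma asymp_isometric_asymptotic_norm:
  "asymp_isometric d (\<lambda>x y. asymptotic_norm smul d (x - y))"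
  by (rule asymp_isometric_trans[OF asymp_isometric_dist_zero
        asymp_isometric_dist_zero_asymptotic_norm])

lemma asymptotic_norm_eq_0_iff:
  assumes unbounded: "\<forall>V. linear_subspace smul V \<and> V \<noteq> {0} \<longrightarrow> unbounded_on d V"
  shows "asymptotic_norm smul d z = 0 \<longleftrightarrow> z = 0"
proof
  assume "z = 0"
  then show "asymptotic_norm smul d z = 0"
    using asymptotic_norm_scale[of 0 0] by (simp add: smul_zero_left[OF module])
next
  assume "asymptotic_norm smul d z = 0"
  obtain K where K: "\<forall>x y. d x y \<le> 2 * asymptotic_norm smul d (x - y) + K"
    using asymp_isometric_asymptotic_norm[unfolded asymp_isometric_iff_bounds, rule_format, of 2]
    by auto
  have "d x y \<le> K" if x: "x \<in> range (\<lambda>a. smul a z)" and y: "y \<in> range (\<lambda>a. smul a z)" for x y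
  proof -
    obtain a b where "x = smul a z" "y = smul b z" using x y by blast
    then have "asymptotic_norm smul d (x - y) = 0"
      using \<open>asymptotic_norm smul d z = 0\<close>
      by (simp add: smul_diff_left[OF module, symmetric] asymptotic_norm_scale)
    then show ?thesis using K by (metis add_0 mult_zero_right)
  qed
  then have "\<not> unbounded_on d (range (\<lambda>a. smul a z))"
    unfolding unbounded_on_def by (meson not_less)
  moreover have "linear_subspace smul (range (\<lambda>a. smul a z))"
    by (rule linear_subspace_line[OF module])
  ultimately have "range (\<lambda>a. smul a z) = {0}"
    using unbounded by blast
  then have "smul 1 z = 0" by blast
  then show "z = 0" by (simp add: smul_one[OF module])
qed

lemma is_norm_asymptotic_norm:
  assumes "\<forall>V. linear_subspace smul V \<and> V \<noteq> {0} \<longrightarrow> unbounded_on d V"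
  shows "is_norm smul (asymptotic_norm smul d)"
  unfolding is_norm_def
proof (intro conjI allI)
  show "asymptotic_norm smul d x \<ge> 0" for x
    using growth_ratio_nonneg by (intro LIMSEQ_le_const[OF growth_ratio_LIMSEQ]) auto
qed (simp_all add: asymptotic_norm_eq_0_iff[OF assms] asymptotic_norm_scale asymptotic_norm_triangle)

end

end

lemma continuous_on_dist_smul:
  fixes smul :: "'k::{real_normed_div_algebra,euclidean_space} \<Rightarrow> 'e::ab_group_add \<Rightarrow> 'e"
  assumes "metric_vector_space smul d"
  shows "continuous_on UNIV (\<lambda>a. d (smul a x) y)"
proof -
  have metric: "Metric_space UNIV d"
    and smul_cont: "continuous_map (prod_topology euclidean (Metric_space.mtopology UNIV d))
        (Metric_space.mtopology UNIV d) (\<lambda>(a, x). smul a x)"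
    using assms unfolding metric_vector_space_def by auto
  have "continuous_map euclidean (prod_topology euclidean (Metric_space.mtopology UNIV d)) (\<lambda>a::'k. (a, x))"
    by (intro continuous_map_pairedI) (auto simp: Metric_space.topspace_mtopology[OF metric])
  from continuous_map_compose[OF this smul_cont]
  have "continuous_map euclidean (Metric_space.mtopology UNIV d) (\<lambda>a. smul a x)"
    by (simp add: o_def)
  then have "continuous_map euclidean euclidean (\<lambda>a. mdist (metric (UNIV, d)) (smul a x) y)"
    by (intro continuous_map_mdist)
      (simp_all add: Metric_space.mtopology_of[OF metric] Metric_space.topspace_mtopology[OF metric])
  then show ?thesis
    by (simp add: Metric_space.mdist_metric[OF metric])
qed

lemma borel_measurable_dist_smul_unit_sphere:
  fixes smul :: "'k::{real_normed_div_algebra,euclidean_space} \<Rightarrow> 'e::ab_group_add \<Rightarrow> 'e"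
    and \<mu> :: "'k measure"
  assumes "metric_vector_space smul d" and "sets \<mu> = sets (restrict_space borel unit_sphere)"
  shows "(\<lambda>u. d (smul (c * u) x) y) \<in> borel_measurable \<mu>"
proof -
  have "continuous_on UNIV (\<lambda>u. d (smul (c * u) x) y)"
    by (rule continuous_on_compose2[OF continuous_on_dist_smul[OF assms(1)]])
      (auto intro: continuous_intros)
  then have "(\<lambda>u. d (smul (c * u) x) y) \<in> borel_measurable (restrict_space borel unit_sphere)"
    by (intro measurable_restrict_space1 borel_measurable_continuous_onI)
  then show ?thesis
    by (subst measurable_cong_sets[OF assms(2) refl])
qed

lemma LIMSEQ_average_over_unit_sphere:
  fixes smul :: "'k::{real_normed_div_algebra,euclidean_space} \<Rightarrow> 'e::ab_group_add \<Rightarrow> 'e"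
    and \<mu> :: "'k measure"
  assumes mvs: "metric_vector_space smul d"
    and prob: "prob_space \<mu>" and sets: "sets \<mu> = sets (restrict_space borel unit_sphere)"
    and norm: "is_norm smul N" and iso: "asymp_isometric d (\<lambda>x y. N (x - y))"
  shows "(\<lambda>n. (\<integral>u. d (smul (of_nat n * u) x) 0 \<partial>\<mu>) / real n) \<longlonglongrightarrow> N x"
proof (rule LIMSEQ_of_asymp_bounds)
  interpret P: prob_space \<mu> by (rule prob)
  show "N x \<ge> 0" using norm unfolding is_norm_def by blast
  fix C :: real assume "C > 1"
  then obtain K where K: "\<forall>x y. d x y \<le> C * N (x - y) + K \<and> N (x - y) \<le> C * d x y + K"
    using iso unfolding asymp_isometric_iff_bounds by blast
  have "(\<integral>u. d (smul (of_nat n * u) x) 0 \<partial>\<mu>) / n \<le> C * N x + K / n \<and>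
      N x \<le> C * ((\<integral>u. d (smul (of_nat n * u) x) 0 \<partial>\<mu>) / n) + K / n" if "n \<ge> 1" for n
  proof -
    let ?f = "\<lambda>u. d (smul (of_nat n * u) x) 0"
    have "space \<mu> = unit_sphere"
      using sets_eq_imp_space_eq[OF sets] by (simp add: space_restrict_space)
    then have "N (smul (of_nat n * u) x - 0) = n * N x" if "u \<in> space \<mu>" for u
      using norm that by (simp add: is_norm_def unit_sphere_def norm_mult)
    then have sphere: "?f u \<le> C * (n * N x) + K \<and> n * N x \<le> C * ?f u + K" if "u \<in> space \<mu>" for u
      using K that by metis
    have "Metric_space UNIV d"
      using mvs unfolding metric_vector_space_def by blast
    then have int: "integrable \<mu> ?f"
      using sphere borel_measurable_dist_smul_unit_sphere[OF mvs sets]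
      by (intro P.integrable_const_bound[where B = "C * (n * N x) + K"] AE_I2)
         (auto simp: Metric_space.nonneg)
    have "(\<integral>u. ?f u \<partial>\<mu>) \<le> C * (n * N x) + K"
      using sphere by (intro P.integral_le_const[OF int] AE_I2) auto
    moreover have "n * N x \<le> C * (\<integral>u. ?f u \<partial>\<mu>) + K"
    proof -
      have "(n * N x - K) / C \<le> (\<integral>u. ?f u \<partial>\<mu>)"
        using sphere \<open>C > 1\<close> by (intro P.integral_ge_const[OF int] AE_I2) (auto simp: field_simps)
      then show ?thesis using \<open>C > 1\<close> by (simp add: field_simps)
    qed
    moreover have "real n > 0" using that by simp
    ultimately show ?thesis
      using divide_le_affine[of "\<integral>u. ?f u \<partial>\<mu>" C "n * N x" K n]
        divide_le_affine[of "n * N x" C "\<integral>u. ?f u \<partial>\<mu>" K n] by simp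
  qed
  then show "\<exists>K. \<forall>n\<ge>1. (\<integral>u. d (smul (of_nat n * u) x) 0 \<partial>\<mu>) / n \<le> C * N x + K / n \<and>
      N x \<le> C * ((\<integral>u. d (smul (of_nat n * u) x) 0 \<partial>\<mu>) / n) + K / n"
    by blast
qed

theorem theorem3:
  fixes smul :: "'k::{real_normed_div_algebra,euclidean_space} \<Rightarrow> 'e::ab_group_add \<Rightarrow> 'e"
    and d :: "'e \<Rightarrow> 'e \<Rightarrow> real"
  assumes "metric_vector_space smul d"
  shows "((\<exists>N. is_norm smul N \<and> asymp_isometric d (\<lambda>x y. N (x - y))) \<longleftrightarrow>
           (asymp_multiplicative smul d \<and>
            (\<forall>V. linear_subspace smul V \<and> V \<noteq> {0} \<longrightarrow> unbounded_on d V) \<and>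
            (\<forall>C1>1. \<exists>C0\<ge>0. \<forall>n\<ge>2. \<forall>x y :: nat \<Rightarrow> 'e.
                d (\<Sum>i<n. x i) (\<Sum>i<n. y i) \<le> C1 * (\<Sum>i<n. d (x i) (y i)) + real n * C0)))
         \<and> (\<forall>\<mu>. right_haar_U \<mu> \<longrightarrow>
              asymp_multiplicative smul d \<longrightarrow>
              (\<forall>V. linear_subspace smul V \<and> V \<noteq> {0} \<longrightarrow> unbounded_on d V) \<longrightarrow>
              (\<forall>C1>1. \<exists>C0\<ge>0. \<forall>n\<ge>2. \<forall>x y :: nat \<Rightarrow> 'e.
                d (\<Sum>i<n. x i) (\<Sum>i<n. y i) \<le> C1 * (\<Sum>i<n. d (x i) (y i)) + real n * C0) \<longrightarrow>
              (\<exists>N. is_norm smul N \<and> asymp_isometric d (\<lambda>x y. N (x - y)) \<and>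
                   (\<forall>x. (\<lambda>n. (\<integral>u. d (smul (of_nat n * u) x) 0 \<partial>\<mu>) / real n) \<longlonglongrightarrow> N x)))"
proof -
  have module: "left_module smul" and metric: "Metric_space UNIV d"
    using assms unfolding metric_vector_space_def by auto
  have necessary: "asymp_multiplicative smul d \<and>
      (\<forall>V. linear_subspace smul V \<and> V \<noteq> {0} \<longrightarrow> unbounded_on d V) \<and> asymp_subadditive d"
    if "is_norm smul N" and "asymp_isometric d (\<lambda>x y. N (x - y))" for N
    using asymp_multiplicative_of_norm[OF that module] unbounded_on_subspace_of_norm[OF that]
      asymp_subadditive_of_norm[OF that] by blast
  have sufficient: "is_norm smul (asymptotic_norm smul d) \<and>
      asymp_isometric d (\<lambda>x y. asymptotic_norm smul d (x - y))"
    if "asymp_multiplicative smul d" and "asymp_subadditive d"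
      and "\<forall>V. linear_subspace smul V \<and> V \<noteq> {0} \<longrightarrow> unbounded_on d V"
    using is_norm_asymptotic_norm[OF module metric that]
      asymp_isometric_asymptotic_norm[OF module metric that(1,2)] by blast
  have average: "(\<lambda>n. (\<integral>u. d (smul (of_nat n * u) x) 0 \<partial>\<mu>) / real n) \<longlonglongrightarrow> N x"
    if "right_haar_U \<mu>" and "is_norm smul N" and "asymp_isometric d (\<lambda>x y. N (x - y))" for \<mu> N x
    using LIMSEQ_average_over_unit_sphere[OF assms _ _ that(2,3)] that(1)
    unfolding right_haar_U_def by blast
  show ?thesis
    unfolding asymp_subadditive_def[symmetric]
  proof (intro conjI allI impI)
    show "(\<exists>N. is_norm smul N \<and> asymp_isometric d (\<lambda>x y. N (x - y))) \<longleftrightarrow>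
        asymp_multiplicative smul d \<and>
        (\<forall>V. linear_subspace smul V \<and> V \<noteq> {0} \<longrightarrow> unbounded_on d V) \<and> asymp_subadditive d"
      using necessary sufficient by blast
    fix \<mu> :: "'k measure"
    assume "right_haar_U \<mu>" "asymp_multiplicative smul d"
      "\<forall>V. linear_subspace smul V \<and> V \<noteq> {0} \<longrightarrow> unbounded_on d V" "asymp_subadditive d"
    with sufficient average show "\<exists>N. is_norm smul N \<and> asymp_isometric d (\<lambda>x y. N (x - y)) \<and>
        (\<forall>x. (\<lambda>n. (\<integral>u. d (smul (of_nat n * u) x) 0 \<partial>\<mu>) / real n) \<longlonglongrightarrow> N x)"
      by blast
  qed
qed

end
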